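(* Let $1< s_0<s_1$ and let $u$ be a sufficiently regular function on $\mathcal{K}_{[s_0,s_1]}$ which vanishes near the conical boundary. Then $$E_{\mathrm{con}}(s_1,u)^{1/2}\leq E_{\mathrm{con}}(s_0,u)^{1/2} + \int_{s_0}^{s_1} s\,\|\Box u\|_{L^2(\mathcal{H}_s)}\,ds .$$
   Context: Coordinates $(t,x)\in\mathbb{R}^{2+1}$, $x=(x^1,x^2)$, $r=|x|$, $\Box=\partial_t^2-\partial_1^2-\partial_2^2$, $s=\sqrt{t^2-r^2}$. $\mathcal{K}=\{t>r+1\}$, $\mathcal{H}_s=\{t=\sqrt{s^2+r^2}\}$, $\mathcal{K}_{[s_0,s_1]}=\{(t,x)\in\mathcal{K}: s_0^2\le t^2-r^2\le s_1^2\}$. "Vanishes near the conical boundary" means $u$ vanishes in a neighbourhood of $\{t=r+1\}$ (so $u$ extends by zero outside $\mathcal{K}$). For $f$ defined near $\mathcal{H}_s$, $\int_{\mathcal{H}_s}f\,dx:=\int_{\mathbb{R}^2}f(\sqrt{s^2+|x|^2},x)\,dx$ and $\|f\|_{L^2(\mathcal{H}_s)}$ is the $L^2(\mathbb{R}^2)$ norm of $x\mapsto f(\sqrt{s^2+|x|^2},x)$. Hyperbolic frame: $\bar\partial_s=(s/t)\partial_t$, $\bar\partial_a=(x^a/t)\partial_t+\partial_a$ ($a=1,2$). $K:=s\bar\partial_s+2x^a\bar\partial_a$ (sum over $a$). Conformal energy: $E_{\mathrm{con}}(s,u):=\int_{\mathcal{H}_s}\big((Ku+u)^2+\sum_{a}|s\bar\partial_a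 u|^2\big)dx$. *)

theory Defs
  imports "HOL-Analysis.Analysis"
begin

text \<open>Points of R^(2+1) are triples (t, x1, x2).\<close>
type_synonym pt = "real \<times> real \<times> real"

definition e_t :: pt where "e_t = (1, 0, 0)"
definition e_1 :: pt where "e_1 = (0, 1, 0)"
definition e_2 :: pt where "e_2 = (0, 0, 1)"

definition pd :: "(pt \<Rightarrow> real) \<Rightarrow> pt \<Rightarrow> pt \<Rightarrow> real" where
  "pd u v p = frechet_derivative u (at p) v"

definition C2_on :: "pt set \<Rightarrow> (pt \<Rightarrow> real) \<Rightarrow> bool" where
  "C2_on U u \<longleftrightarrow> open U \<and> (\<forall>p\<in>U. u differentiable (at p))
     \<and> (\<forall>v. \<forall>p\<in>U. (\<lambda>q. pd u v q) differentiable (at p))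
     \<and> (\<forall>v w. continuous_on U (\<lambda>q. pd (\<lambda>q'. pd u v q') w q))"

definition tco :: "pt \<Rightarrow> real" where "tco p = fst p"
definition x1co :: "pt \<Rightarrow> real" where "x1co p = fst (snd p)"
definition x2co :: "pt \<Rightarrow> real" where "x2co p = snd (snd p)"
definition rad :: "pt \<Rightarrow> real" where "rad p = sqrt ((x1co p)^2 + (x2co p)^2)"
definition hs :: "pt \<Rightarrow> real" where "hs p = sqrt ((tco p)^2 - (rad p)^2)"

definition wave :: "(pt \<Rightarrow> real) \<Rightarrow> pt \<Rightarrow> real" where
  "wave u p = pd (\<lambda>q. pd u e_t q) e_t p - pd (\<lambda>q. pd u e_1 q) e_1 p
              - pd (\<lambda>q. pd u e_2 q) e_2 p"

definition bar_s :: "(pt \<Rightarrow> real) \<Rightarrow> pt \<Rightarrow> real" where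
  "bar_s u p = (hs p / tco p) * pd u e_t p"
definition bar_1 :: "(pt \<Rightarrow> real) \<Rightarrow> pt \<Rightarrow> real" where
  "bar_1 u p = (x1co p / tco p) * pd u e_t p + pd u e_1 p"
definition bar_2 :: "(pt \<Rightarrow> real) \<Rightarrow> pt \<Rightarrow> real" where
  "bar_2 u p = (x2co p / tco p) * pd u e_t p + pd u e_2 p"

definition Kop :: "(pt \<Rightarrow> real) \<Rightarrow> pt \<Rightarrow> real" where
  "Kop u p = hs p * bar_s u p + 2 * (x1co p * bar_1 u p + x2co p * bar_2 u p)"

text \<open>Point of the hyperboloid H_s above x = (y1, y2).\<close>
definition hyp :: "real \<Rightarrow> real \<times> real \<Rightarrow> pt" where
  "hyp s y = (sqrt (s^2 + (fst y)^2 + (snd y)^2), fst y, snd y)"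

definition E_con :: "real \<Rightarrow> (pt \<Rightarrow> real) \<Rightarrow> real" where
  "E_con s u = integral UNIV (\<lambda>y::real \<times> real.
       (Kop u (hyp s y) + u (hyp s y))^2
     + (s * bar_1 u (hyp s y))^2 + (s * bar_2 u (hyp s y))^2)"

definition L2_hyp :: "real \<Rightarrow> (pt \<Rightarrow> real) \<Rightarrow> real" where
  "L2_hyp s f = sqrt (integral UNIV (\<lambda>y::real \<times> real. (f (hyp s y))^2))"

text \<open>Hyperbolic slab {t > 0, s0^2 <= t^2 - r^2 <= s1^2}; intersected with
  {t > r + 1} it is K_[s0,s1].\<close>
definition slab :: "real \<Rightarrow> real \<Rightarrow> pt set" where
  "slab s0 s1 = {p. tco p > 0 \<and> s0^2 \<le> (tco p)^2 - (rad p)^2 \<and> (tco p)^2 - (rad p)^2 \<le> s1^2}"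

end

theory Submission
  imports Defs
begin

text \<open>Write \<open>\<phi>(s, y) = u(\<surd>(s\<^sup>2 + |y|\<^sup>2), y)\<close> for \<open>u\<close> in hyperboloidal coordinates.
  The partial derivatives \<open>\<partial>\<^sub>s\<phi>\<close>, \<open>\<partial>\<^sub>a\<phi>\<close> are the hyperbolic frame derivatives of \<open>u\<close> on \<open>H\<^sub>s\<close>,
  and the conformal energy density \<open>e = (K u + u)\<^sup>2 + s\<^sup>2 |\<nabla>\<phi>|\<^sup>2\<close> satisfies the pointwise
  identity \<open>\<partial>\<^sub>s e = 2 s (K u + u) \<box>u + \<partial>\<^sub>1 F\<^sub>1 + \<partial>\<^sub>2 F\<^sub>2\<close>. Because \<open>u\<close> vanishes near the
  cone and \<open>t - r = s\<^sup>2 / (t + r)\<close> is small for large \<open>r\<close>, all fields vanish outside a fixed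
  square of the \<open>y\<close>-plane, so the flux terms integrate to zero. Differentiating under the
  integral sign and applying Cauchy-Schwarz gives \<open>E' \<le> 2 \<surd>E s \<parallel>\<box>u\<parallel>\<close>, which integrates
  to the bound for \<open>\<surd>E\<close>.\<close>

section \<open>Directional derivatives\<close>

lemma has_derivative_pd:
  "f differentiable (at p) \<Longrightarrow> (f has_derivative (\<lambda>v. pd f v p)) (at p)"
  unfolding pd_def using frechet_derivative_works by (metis eta_contract_eq)

lemma linear_pd: "f differentiable (at p) \<Longrightarrow> linear (\<lambda>v. pd f v p)"
  using has_derivative_pd has_derivative_linear by blast

lemma pd_scaleR: "f differentiable (at p) \<Longrightarrow> pd f (c *\<^sub>R v) p = c * pd f v p"
  using linear_scale[OF linear_pd] by fastforce

lemma pd_add: "f differentiable (at p) \<Longrightarrow> pd f (v + w) p = pd f v p + pd f w p"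
  using linear_add[OF linear_pd] by fastforce

lemma pd_coordinates:
  assumes "f differentiable (at p)"
  shows "pd f (a, b, c) p = a * pd f e_t p + b * pd f e_1 p + c * pd f e_2 p"
proof -
  have "(a, b, c) = a *\<^sub>R e_t + b *\<^sub>R e_1 + c *\<^sub>R e_2"
    by (simp add: e_t_def e_1_def e_2_def)
  then show ?thesis using assms by (simp add: pd_add pd_scaleR)
qed

lemma has_real_derivative_pd_comp:
  assumes "(g has_vector_derivative w) (at x within X)" "f differentiable (at (g x))"
  shows "((\<lambda>x. f (g x)) has_real_derivative pd f w (g x)) (at x within X)"
proof -
  have "((\<lambda>x. f (g x)) has_derivative (\<lambda>h. pd f (h *\<^sub>R w) (g x))) (at x within X)"
    using assms(1) has_derivative_pd[OF assms(2)] unfolding has_vector_derivative_def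
    by (rule has_derivative_compose)
  moreover have "(\<lambda>h. pd f (h *\<^sub>R w) (g x)) = (\<lambda>h. pd f w (g x) * h)"
    using pd_scaleR[OF assms(2)] by (auto simp: mult.commute)
  ultimately show ?thesis by (simp add: has_field_derivative_def)
qed

lemma has_real_derivative_along_line:
  "f differentiable (at (q + a *\<^sub>R v)) \<Longrightarrow>
   ((\<lambda>a. f (q + a *\<^sub>R v)) has_real_derivative pd f v (q + a *\<^sub>R v)) (at a within X)"
  by (rule has_real_derivative_pd_comp) (auto intro!: derivative_eq_intros)

lemma pd_eq_0_if_vanishes_on_open:
  assumes "open V" "\<And>q. q \<in> V \<Longrightarrow> f q = 0" "p \<in> V"
  shows "pd f v p = 0"
proof -
  have "(f has_derivative (\<lambda>v. 0)) (at p)"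
    by (rule has_derivative_transform_within_open[OF has_derivative_const assms(1,3)])
      (simp add: assms(2))
  then have "frechet_derivative f (at p) = (\<lambda>v. 0)"
    by (simp add: frechet_derivative_at[symmetric])
  then show ?thesis by (simp add: pd_def)
qed

section \<open>Symmetry of second derivatives\<close>

lemma second_difference_eq_mixed_pd:
  fixes f :: "pt \<Rightarrow> real"
  assumes h: "h > 0"
    and square: "\<And>a b. 0 \<le> a \<Longrightarrow> a \<le> h \<Longrightarrow> 0 \<le> b \<Longrightarrow> b \<le> h \<Longrightarrow> p + a *\<^sub>R v + b *\<^sub>R w \<in> U"
    and df: "\<And>q. q \<in> U \<Longrightarrow> f differentiable (at q)"
    and dfv: "\<And>q. q \<in> U \<Longrightarrow> (\<lambda>q. pd f v q) differentiable (at q)"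
  obtains a b where "0 \<le> a" "a \<le> h" "0 \<le> b" "b \<le> h"
    "f (p + h *\<^sub>R v + h *\<^sub>R w) - f (p + h *\<^sub>R v) - f (p + h *\<^sub>R w) + f p
       = h\<^sup>2 * pd (\<lambda>q. pd f v q) w (p + a *\<^sub>R v + b *\<^sub>R w)"
proof -
  define G where "G a = f ((p + h *\<^sub>R w) + a *\<^sub>R v) - f (p + a *\<^sub>R v)" for a
  have "(G has_real_derivative (pd f v ((p + h *\<^sub>R w) + a *\<^sub>R v) - pd f v (p + a *\<^sub>R v))) (at a)"
    if "0 \<le> a" "a \<le> h" for a
  proof -
    have "(p + h *\<^sub>R w) + a *\<^sub>R v \<in> U" using square[of a h] that h by (simp add: add_ac)
    moreover have "p + a *\<^sub>R v \<in> U" using square[of a 0] that h by simp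
    ultimately show ?thesis unfolding G_def by (intro DERIV_diff has_real_derivative_along_line df)
  qed
  then obtain a where a: "0 < a" "a < h"
    and Ga: "G h - G 0 = (h - 0) * (pd f v ((p + h *\<^sub>R w) + a *\<^sub>R v) - pd f v (p + a *\<^sub>R v))"
    using MVT2[OF h, of G "\<lambda>a. pd f v ((p + h *\<^sub>R w) + a *\<^sub>R v) - pd f v (p + a *\<^sub>R v)"] by auto
  define H where "H b = pd f v ((p + a *\<^sub>R v) + b *\<^sub>R w)" for b
  have "(H has_real_derivative pd (\<lambda>q. pd f v q) w ((p + a *\<^sub>R v) + b *\<^sub>R w)) (at b)"
    if "0 \<le> b" "b \<le> h" for b
  proof -
    have "(p + a *\<^sub>R v) + b *\<^sub>R w \<in> U" using square[of a b] that a by simp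
    then show ?thesis unfolding H_def by (intro has_real_derivative_along_line dfv)
  qed
  then obtain b where b: "0 < b" "b < h"
    and Hb: "H h - H 0 = (h - 0) * pd (\<lambda>q. pd f v q) w ((p + a *\<^sub>R v) + b *\<^sub>R w)"
    using MVT2[OF h, of H "\<lambda>b. pd (\<lambda>q. pd f v q) w ((p + a *\<^sub>R v) + b *\<^sub>R w)"] by auto
  have "f (p + h *\<^sub>R v + h *\<^sub>R w) - f (p + h *\<^sub>R v) - f (p + h *\<^sub>R w) + f p = G h - G 0"
    by (simp add: G_def add_ac)
  also have "\<dots> = h * (H h - H 0)" using Ga by (simp add: H_def add_ac)
  also have "\<dots> = h\<^sup>2 * pd (\<lambda>q. pd f v q) w (p + a *\<^sub>R v + b *\<^sub>R w)"
    using Hb by (simp add: power2_eq_square)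
  finally have "f (p + h *\<^sub>R v + h *\<^sub>R w) - f (p + h *\<^sub>R v) - f (p + h *\<^sub>R w) + f p
       = h\<^sup>2 * pd (\<lambda>q. pd f v q) w (p + a *\<^sub>R v + b *\<^sub>R w)" .
  with a b show ?thesis by (intro that) auto
qed

lemma small_square_in_ball:
  fixes v w :: "'a::real_normed_vector"
  assumes "r > 0"
  obtains h where "h > 0"
    "\<And>a b. 0 \<le> a \<Longrightarrow> a \<le> h \<Longrightarrow> 0 \<le> b \<Longrightarrow> b \<le> h \<Longrightarrow> norm (a *\<^sub>R v + b *\<^sub>R w) < r"
proof
  define h where "h = r / (norm v + norm w + 1)"
  have N: "norm v + norm w + 1 > 0" by (simp add: add_nonneg_pos)
  then show "h > 0" using assms by (simp add: h_def)
  fix a b :: real assume ab: "0 \<le> a" "a \<le> h" "0 \<le> b" "b \<le> h"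
  have "norm (a *\<^sub>R v + b *\<^sub>R w) \<le> a * norm v + b * norm w"
    using norm_triangle_ineq[of "a *\<^sub>R v" "b *\<^sub>R w"] ab by simp
  also have "\<dots> \<le> h * norm v + h * norm w"
    using ab by (intro add_mono mult_right_mono) auto
  also have "\<dots> < h * (norm v + norm w + 1)" using \<open>h > 0\<close> by (simp add: algebra_simps)
  also have "\<dots> = r" using N by (simp add: h_def)
  finally show "norm (a *\<^sub>R v + b *\<^sub>R w) < r" .
qed

text \<open>Schwarz's theorem: both mixed second derivatives are limits of the same second
  difference quotient.\<close>

lemma pd_pd_commute:
  fixes f :: "pt \<Rightarrow> real"
  assumes U: "open U" "p \<in> U"
    and df: "\<And>q. q \<in> U \<Longrightarrow> f differentiable (at q)"
    and dfv: "\<And>q. q \<in> U \<Longrightarrow> (\<lambda>q. pd f v q) differentiable (at q)"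
    and dfw: "\<And>q. q \<in> U \<Longrightarrow> (\<lambda>q. pd f w q) differentiable (at q)"
    and cvw: "continuous_on U (\<lambda>q. pd (\<lambda>q'. pd f v q') w q)"
    and cwv: "continuous_on U (\<lambda>q. pd (\<lambda>q'. pd f w q') v q)"
  shows "pd (\<lambda>q. pd f v q) w p = pd (\<lambda>q. pd f w q) v p"
proof (rule ccontr)
  let ?A = "pd (\<lambda>q. pd f v q) w p" and ?B = "pd (\<lambda>q. pd f w q) v p"
  assume "?A \<noteq> ?B"
  define e where "e = \<bar>?A - ?B\<bar> / 2"
  have e: "e > 0" using \<open>?A \<noteq> ?B\<close> by (simp add: e_def)
  obtain r1 where r1: "r1 > 0" "\<And>q. dist q p < r1 \<Longrightarrow> dist (pd (\<lambda>q'. pd f v q') w q) ?A < e"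
    using cvw U e unfolding continuous_on_eq_continuous_at[OF U(1)] continuous_at_eps_delta by blast
  obtain r2 where r2: "r2 > 0" "\<And>q. dist q p < r2 \<Longrightarrow> dist (pd (\<lambda>q'. pd f w q') v q) ?B < e"
    using cwv U e unfolding continuous_on_eq_continuous_at[OF U(1)] continuous_at_eps_delta by blast
  obtain r3 where r3: "r3 > 0" "ball p r3 \<subseteq> U" using U open_contains_ball by blast
  obtain h where h: "h > 0" and small:
    "\<And>a b. 0 \<le> a \<Longrightarrow> a \<le> h \<Longrightarrow> 0 \<le> b \<Longrightarrow> b \<le> h \<Longrightarrow> norm (a *\<^sub>R v + b *\<^sub>R w) < min r1 (min r2 r3)"
    using small_square_in_ball[of "min r1 (min r2 r3)" v w] r1 r2 r3 by auto
  have close: "dist (p + a *\<^sub>R v + b *\<^sub>R w) p < min r1 (min r2 r3)"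
    if "0 \<le> a" "a \<le> h" "0 \<le> b" "b \<le> h" for a b
    using small[OF that] by (simp add: dist_norm)
  have inU: "p + a *\<^sub>R v + b *\<^sub>R w \<in> U" "p + b *\<^sub>R w + a *\<^sub>R v \<in> U"
    if "0 \<le> a" "a \<le> h" "0 \<le> b" "b \<le> h" for a b
    using close[OF that] r3(2) by (auto simp: dist_commute add_ac)
  obtain a b where ab: "0 \<le> a" "a \<le> h" "0 \<le> b" "b \<le> h" and
    D1: "f (p + h *\<^sub>R v + h *\<^sub>R w) - f (p + h *\<^sub>R v) - f (p + h *\<^sub>R w) + f p
       = h\<^sup>2 * pd (\<lambda>q. pd f v q) w (p + a *\<^sub>R v + b *\<^sub>R w)"
    using second_difference_eq_mixed_pd[OF h inU(1) df dfv] by blast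
  obtain a' b' where ab': "0 \<le> a'" "a' \<le> h" "0 \<le> b'" "b' \<le> h" and
    D2: "f (p + h *\<^sub>R w + h *\<^sub>R v) - f (p + h *\<^sub>R w) - f (p + h *\<^sub>R v) + f p
       = h\<^sup>2 * pd (\<lambda>q. pd f w q) v (p + a' *\<^sub>R w + b' *\<^sub>R v)"
    using second_difference_eq_mixed_pd[OF h inU(2) df dfw] by blast
  have "h\<^sup>2 * pd (\<lambda>q. pd f v q) w (p + a *\<^sub>R v + b *\<^sub>R w)
      = h\<^sup>2 * pd (\<lambda>q. pd f w q) v (p + a' *\<^sub>R w + b' *\<^sub>R v)"
    using D1 D2 by (simp only: add.commute[of "h *\<^sub>R v"] add.assoc)
  then have "pd (\<lambda>q. pd f v q) w (p + a *\<^sub>R v + b *\<^sub>R w)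
      = pd (\<lambda>q. pd f w q) v (p + a' *\<^sub>R w + b' *\<^sub>R v)"
    using h by simp
  moreover have "dist (pd (\<lambda>q'. pd f v q') w (p + a *\<^sub>R v + b *\<^sub>R w)) ?A < e"
    using r1(2) close[OF ab] by simp
  moreover have "dist (pd (\<lambda>q'. pd f w q') v (p + a' *\<^sub>R w + b' *\<^sub>R v)) ?B < e"
    using r2(2) close[of b' a'] ab' by (simp add: add_ac)
  ultimately have "\<bar>?A - ?B\<bar> < 2 * e" by (simp add: dist_real_def)
  then show False by (simp add: e_def)
qed

lemma le_sqrt_mult_sqrt_if_weighted_bound:
  fixes X A B :: real
  assumes "A \<ge> 0" "B \<ge> 0" and bound: "\<And>c. c > 0 \<Longrightarrow> 2 * X \<le> c * A + B / c"
  shows "X \<le> sqrt A * sqrt B"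
proof (rule field_le_epsilon)
  fix e :: real assume "e > 0"
  define a b where "a = sqrt A" and "b = sqrt B"
  \<comment> \<open>the weight \<open>c = (b + d) / (a + d)\<close> is optimal up to \<open>d\<close>, also when \<open>a\<close> or \<open>b\<close> is zero\<close>
  have ab: "a \<ge> 0" "b \<ge> 0" "A = a\<^sup>2" "B = b\<^sup>2" using assms by (auto simp: a_def b_def)
  define d where "d = e / (a + b + 1)"
  have d: "d > 0" "d * (a + b) \<le> e"
    using \<open>e > 0\<close> ab by (auto simp: d_def field_simps)
  have "2 * X \<le> (b + d) / (a + d) * A + B / ((b + d) / (a + d))"
    using d ab by (intro bound) simp
  also have "\<dots> = (b + d) * (a\<^sup>2 / (a + d)) + (a + d) * (b\<^sup>2 / (b + d))"
    using ab by simp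
  also have "\<dots> \<le> (b + d) * a + (a + d) * b"
    using ab d by (intro add_mono mult_left_mono) (auto simp: field_simps power2_eq_square)
  also have "\<dots> \<le> 2 * (a * b + e)" using d \<open>e > 0\<close> by (simp add: algebra_simps)
  finally show "X \<le> sqrt A * sqrt B + e" by (simp add: a_def b_def)
qed

lemma Cauchy_Schwarz_integral:
  fixes f g :: "'a::euclidean_space \<Rightarrow> real"
  assumes ff: "(\<lambda>x. (f x)\<^sup>2) integrable_on S" and gg: "(\<lambda>x. (g x)\<^sup>2) integrable_on S"
    and fg: "(\<lambda>x. f x * g x) integrable_on S"
  shows "integral S (\<lambda>x. f x * g x)
    \<le> sqrt (integral S (\<lambda>x. (f x)\<^sup>2)) * sqrt (integral S (\<lambda>x. (g x)\<^sup>2))"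
proof (rule le_sqrt_mult_sqrt_if_weighted_bound)
  show "integral S (\<lambda>x. (f x)\<^sup>2) \<ge> 0" "integral S (\<lambda>x. (g x)\<^sup>2) \<ge> 0"
    using ff gg by (simp_all add: integral_nonneg)
  fix c :: real assume c: "c > 0"
  have pointwise: "2 * (f x * g x) \<le> c * (f x)\<^sup>2 + (g x)\<^sup>2 / c" for x
  proof -
    have "0 \<le> (c * f x - g x)\<^sup>2 / c" using c by simp
    also have "\<dots> = c * (f x)\<^sup>2 + (g x)\<^sup>2 / c - 2 * (f x * g x)"
      using c by (simp add: field_simps power2_eq_square)
    finally show ?thesis by simp
  qed
  have "2 * integral S (\<lambda>x. f x * g x) = integral S (\<lambda>x. 2 * (f x * g x))" by simp
  also have "\<dots> \<le> integral S (\<lambda>x. c * (f x)\<^sup>2 + (g x)\<^sup>2 / c)"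
    using fg ff gg pointwise c by (intro integral_le integrable_add) auto
  also have "\<dots> = c * integral S (\<lambda>x. (f x)\<^sup>2) + integral S (\<lambda>x. (g x)\<^sup>2) / c"
    using ff gg c by (simp add: integral_add)
  finally show "2 * integral S (\<lambda>x. f x * g x)
    \<le> c * integral S (\<lambda>x. (f x)\<^sup>2) + integral S (\<lambda>x. (g x)\<^sup>2) / c" .
qed

text \<open>Comparison argument for the differential inequality \<open>E' \<le> 2 \<surd>E g\<close>: since \<open>\<surd>E\<close> need
  not be differentiable where \<open>E = 0\<close>, it is run for \<open>\<surd>(E + \<epsilon>\<^sup>2)\<close> and \<open>\<epsilon> \<rightarrow> 0\<close>.\<close>

lemma sqrt_le_sqrt_add_integral_if_deriv_le:
  fixes E E' g :: "real \<Rightarrow> real"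
  assumes "a \<le> b"
    and dE: "\<And>s. s \<in> {a..b} \<Longrightarrow> (E has_real_derivative E' s) (at s within {a..b})"
    and bound: "\<And>s. s \<in> {a..b} \<Longrightarrow> E' s \<le> 2 * sqrt (E s) * g s"
    and E_nonneg: "\<And>s. s \<in> {a..b} \<Longrightarrow> E s \<ge> 0"
    and g_nonneg: "\<And>s. s \<in> {a..b} \<Longrightarrow> g s \<ge> 0"
    and g_cont: "continuous_on {a..b} g"
  shows "sqrt (E b) \<le> sqrt (E a) + integral {a..b} g"
proof (rule field_le_epsilon)
  fix \<epsilon> :: real assume "\<epsilon> > 0"
  define \<phi> where "\<phi> s = sqrt (E s + \<epsilon>\<^sup>2) - integral {a..s} g" for s
  define \<phi>' where "\<phi>' s = inverse (sqrt (E s + \<epsilon>\<^sup>2)) / 2 * E' s - g s" for s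
  have pos: "E s + \<epsilon>\<^sup>2 > 0" if "s \<in> {a..b}" for s
    using E_nonneg[OF that] \<open>\<epsilon> > 0\<close> by (simp add: add_nonneg_pos)
  have "(\<phi> has_derivative (\<lambda>h. \<phi>' s * h)) (at s within {a..b})" if s: "s \<in> {a..b}" for s
  proof -
    have "((\<lambda>s. E s + \<epsilon>\<^sup>2) has_real_derivative E' s) (at s within {a..b})"
      using DERIV_add[OF dE[OF s] DERIV_const] by simp
    then have "((\<lambda>s. sqrt (E s + \<epsilon>\<^sup>2)) has_real_derivative
        inverse (sqrt (E s + \<epsilon>\<^sup>2)) / 2 * E' s) (at s within {a..b})"
      by (rule DERIV_chain2[where g = "\<lambda>s. E s + \<epsilon>\<^sup>2", OF DERIV_real_sqrt[OF pos[OF s]]])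
    moreover have "((\<lambda>s. integral {a..s} g) has_real_derivative g s) (at s within {a..b})"
      unfolding has_real_derivative_iff_has_vector_derivative
      by (rule integral_has_vector_derivative[OF g_cont s])
    ultimately have "(\<phi> has_real_derivative \<phi>' s) (at s within {a..b})"
      unfolding \<phi>_def[abs_def] \<phi>'_def by (rule DERIV_diff)
    then show ?thesis by (simp add: has_field_derivative_def)
  qed
  then obtain x where x: "x \<in> {a..b}" and mvt: "\<phi> b - \<phi> a = \<phi>' x * (b - a)"
    using mvt_very_simple[OF \<open>a \<le> b\<close>, of \<phi> "\<lambda>s h. \<phi>' s * h"] by auto
  have "\<phi>' x \<le> 0"
  proof -
    have "inverse (sqrt (E x + \<epsilon>\<^sup>2)) / 2 * E' x
        \<le> inverse (sqrt (E x + \<epsilon>\<^sup>2)) / 2 * (2 * sqrt (E x) * g x)"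
      using bound[OF x] pos[OF x] by (intro mult_left_mono) simp_all
    also have "\<dots> = g x * (sqrt (E x) / sqrt (E x + \<epsilon>\<^sup>2))" by (simp add: field_simps)
    also have "\<dots> \<le> g x"
      using pos[OF x] g_nonneg[OF x] by (intro mult_left_le) simp_all
    finally show ?thesis by (simp add: \<phi>'_def)
  qed
  then have "\<phi> b \<le> \<phi> a" using mvt \<open>a \<le> b\<close> mult_nonpos_nonneg[of "\<phi>' x" "b - a"] by simp
  moreover have "sqrt (E a + \<epsilon>\<^sup>2) \<le> sqrt (E a) + \<epsilon>"
    using sqrt_add_le_add_sqrt[of "E a" "\<epsilon>\<^sup>2"] E_nonneg[of a] \<open>a \<le> b\<close> \<open>\<epsilon> > 0\<close> by simp
  moreover have "sqrt (E b) \<le> sqrt (E b + \<epsilon>\<^sup>2)" "integral {a..a} g = 0" by simp_all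
  ultimately show "sqrt (E b) \<le> sqrt (E a) + integral {a..b} g + \<epsilon>"
    unfolding \<phi>_def by linarith
qed

lemma integral_UNIV_eq_if_vanishes_outside:
  fixes f :: "'a::euclidean_space \<Rightarrow> 'b::banach"
  assumes "\<And>x. x \<notin> S \<Longrightarrow> f x = 0"
  shows "integral UNIV f = integral S f"
proof -
  have "integral UNIV f = integral UNIV (\<lambda>x. if x \<in> S then f x else 0)"
    using assms by (intro integral_cong) auto
  then show ?thesis by (simp add: integral_restrict_UNIV)
qed

lemma integral_cbox_eq_0_if_antiderivative_2:
  fixes F D :: "real \<times> real \<Rightarrow> real"
  assumes "a2 \<le> b2" and D_cont: "continuous_on (cbox (a1, a2) (b1, b2)) D"
    and F': "\<And>x y. x \<in> {a1..b1} \<Longrightarrow> y \<in> {a2..b2} \<Longrightarrow>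
      ((\<lambda>y. F (x, y)) has_real_derivative D (x, y)) (at y within {a2..b2})"
    and periodic: "\<And>x. x \<in> {a1..b1} \<Longrightarrow> F (x, a2) = F (x, b2)"
  shows "integral (cbox (a1, a2) (b1, b2)) D = 0"
proof -
  have "integral (cbox a2 b2) (\<lambda>y. D (x, y)) = 0" if x: "x \<in> {a1..b1}" for x
  proof -
    have "((\<lambda>y. D (x, y)) has_integral F (x, b2) - F (x, a2)) {a2..b2}"
      using \<open>a2 \<le> b2\<close> F'[OF x, unfolded has_real_derivative_iff_has_vector_derivative]
      by (intro fundamental_theorem_of_calculus) auto
    then show ?thesis using periodic[OF x] by (simp add: integral_unique)
  qed
  then have "integral (cbox a1 b1) (\<lambda>x. integral (cbox a2 b2) (\<lambda>y. D (x, y)))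
      = integral (cbox a1 b1) (\<lambda>x. 0)"
    by (intro integral_cong) simp
  then show ?thesis
    using integral_prod_continuous[OF D_cont] by simp
qed

lemma integral_cbox_eq_0_if_antiderivative_1:
  fixes F D :: "real \<times> real \<Rightarrow> real"
  assumes "a1 \<le> b1" and D_cont: "continuous_on (cbox (a1, a2) (b1, b2)) D"
    and F': "\<And>x y. x \<in> {a1..b1} \<Longrightarrow> y \<in> {a2..b2} \<Longrightarrow>
      ((\<lambda>x. F (x, y)) has_real_derivative D (x, y)) (at x within {a1..b1})"
    and periodic: "\<And>y. y \<in> {a2..b2} \<Longrightarrow> F (a1, y) = F (b1, y)"
  shows "integral (cbox (a1, a2) (b1, b2)) D = 0"
proof -
  have "integral (cbox a1 b1) (\<lambda>x. D (x, y)) = 0" if y: "y \<in> {a2..b2}" for y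
  proof -
    have "((\<lambda>x. D (x, y)) has_integral F (b1, y) - F (a1, y)) {a1..b1}"
      using \<open>a1 \<le> b1\<close> F'[OF _ y, unfolded has_real_derivative_iff_has_vector_derivative]
      by (intro fundamental_theorem_of_calculus) auto
    then show ?thesis using periodic[OF y] by (simp add: integral_unique)
  qed
  then have "integral (cbox a2 b2) (\<lambda>y. integral (cbox a1 b1) (\<lambda>x. D (x, y)))
      = integral (cbox a2 b2) (\<lambda>y. 0)"
    by (intro integral_cong) simp
  moreover have "continuous_on (cbox (a1, a2) (b1, b2)) (\<lambda>(x, y). D (x, y))"
    using D_cont by (simp add: case_prod_unfold)
  ultimately show ?thesis
    using integral_prod_continuous[OF D_cont]
      integral_swap_continuous[of a1 a2 b1 b2 "\<lambda>x y. D (x, y)"]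
    by simp
qed

section \<open>Hyperboloidal coordinates\<close>

definition hyp_time :: "real \<Rightarrow> real \<times> real \<Rightarrow> real" where
  "hyp_time s y = sqrt (s\<^sup>2 + (fst y)\<^sup>2 + (snd y)\<^sup>2)"

lemma hyp_eq: "hyp s y = (hyp_time s y, fst y, snd y)"
  by (simp add: hyp_def hyp_time_def)

lemma hyp_time_squared: "(hyp_time s y)\<^sup>2 = s\<^sup>2 + (fst y)\<^sup>2 + (snd y)\<^sup>2"
  by (simp add: hyp_time_def)

lemma hyp_time_pos: "s \<noteq> 0 \<Longrightarrow> hyp_time s y > 0"
  by (simp add: hyp_time_def add_pos_nonneg)

lemma coordinates_hyp:
  "tco (hyp s y) = hyp_time s y" "x1co (hyp s y) = fst y" "x2co (hyp s y) = snd y"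
  by (simp_all add: hyp_eq tco_def x1co_def x2co_def)

lemma rad_hyp: "rad (hyp s y) = norm y"
  by (cases y) (simp add: rad_def coordinates_hyp norm_Pair)

lemma hs_hyp: "s \<ge> 0 \<Longrightarrow> hs (hyp s y) = s"
  by (simp add: hs_def coordinates_hyp hyp_time_squared rad_def)

lemma hyp_in_slab: "0 < s0 \<Longrightarrow> s0 \<le> s \<Longrightarrow> s \<le> s1 \<Longrightarrow> hyp s y \<in> slab s0 s1"
  unfolding slab_def using hyp_time_pos[of s y]
  by (simp add: coordinates_hyp rad_def hyp_time_squared power_mono)

lemma continuous_on_hyp: "continuous_on X (\<lambda>z::real \<times> (real \<times> real). hyp (fst z) (snd z))"
  unfolding hyp_def by (intro continuous_intros)

lemma continuous_on_hyp_time: "continuous_on X (\<lambda>z::real \<times> (real \<times> real). hyp_time (fst z) (snd z))"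
  unfolding hyp_time_def by (intro continuous_intros)

lemma has_real_derivative_sqrt_add_square:
  "c + x\<^sup>2 > 0 \<Longrightarrow> ((\<lambda>x. sqrt (c + x\<^sup>2)) has_real_derivative x / sqrt (c + x\<^sup>2)) (at x within X)"
  by (auto intro!: derivative_eq_intros simp: field_simps)

lemma has_real_derivative_hyp_time_s:
  assumes "s \<noteq> 0"
  shows "((\<lambda>\<sigma>. hyp_time \<sigma> y) has_real_derivative s / hyp_time s y) (at s within X)"
proof -
  have "((fst y)\<^sup>2 + (snd y)\<^sup>2) + s\<^sup>2 > 0" using assms by (simp add: add_nonneg_pos)
  moreover have "hyp_time \<sigma> y = sqrt (((fst y)\<^sup>2 + (snd y)\<^sup>2) + \<sigma>\<^sup>2)" for \<sigma>
    by (simp add: hyp_time_def add_ac)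
  ultimately show ?thesis using has_real_derivative_sqrt_add_square by presburger
qed

lemma has_real_derivative_hyp_time_1:
  assumes "s \<noteq> 0"
  shows "((\<lambda>a. hyp_time s (a, b)) has_real_derivative a / hyp_time s (a, b)) (at a within X)"
proof -
  have "(s\<^sup>2 + b\<^sup>2) + a\<^sup>2 > 0" using assms by (simp add: add_pos_nonneg)
  moreover have "hyp_time s (a, b) = sqrt ((s\<^sup>2 + b\<^sup>2) + a\<^sup>2)" for a
    by (simp add: hyp_time_def add_ac)
  ultimately show ?thesis using has_real_derivative_sqrt_add_square by presburger
qed

lemma has_real_derivative_hyp_time_2:
  assumes "s \<noteq> 0"
  shows "((\<lambda>b. hyp_time s (a, b)) has_real_derivative b / hyp_time s (a, b)) (at b within X)"
proof -
  have "(s\<^sup>2 + a\<^sup>2) + b\<^sup>2 > 0" using assms by (simp add: add_pos_nonneg)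
  moreover have "hyp_time s (a, b) = sqrt ((s\<^sup>2 + a\<^sup>2) + b\<^sup>2)" for b
    by (simp add: hyp_time_def add_ac)
  ultimately show ?thesis using has_real_derivative_sqrt_add_square by presburger
qed

lemma has_real_derivative_comp_hyp_s:
  assumes "s \<noteq> 0" "f differentiable (at (hyp s y))"
  shows "((\<lambda>\<sigma>. f (hyp \<sigma> y)) has_real_derivative
    (s / hyp_time s y) * pd f e_t (hyp s y)) (at s within X)"
proof -
  have "((\<lambda>\<sigma>. hyp \<sigma> y) has_vector_derivative (s / hyp_time s y, 0, 0)) (at s within X)"
    unfolding hyp_eq
    by (intro has_vector_derivative_Pair
        has_real_derivative_hyp_time_s[OF assms(1), unfolded has_real_derivative_iff_has_vector_derivative])
      (auto intro!: derivative_eq_intros)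
  from has_real_derivative_pd_comp[OF this assms(2)] show ?thesis
    using pd_coordinates[OF assms(2)] by simp
qed

lemma has_real_derivative_comp_hyp_1:
  assumes "s \<noteq> 0" "f differentiable (at (hyp s (a, b)))"
  shows "((\<lambda>a. f (hyp s (a, b))) has_real_derivative
    (a / hyp_time s (a, b)) * pd f e_t (hyp s (a, b)) + pd f e_1 (hyp s (a, b))) (at a within X)"
proof -
  have "((\<lambda>a. hyp s (a, b)) has_vector_derivative (a / hyp_time s (a, b), 1, 0)) (at a within X)"
    unfolding hyp_eq
    by (intro has_vector_derivative_Pair
        has_real_derivative_hyp_time_1[OF assms(1), unfolded has_real_derivative_iff_has_vector_derivative])
      (auto intro!: derivative_eq_intros)
  from has_real_derivative_pd_comp[OF this assms(2)] show ?thesis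
    using pd_coordinates[OF assms(2)] by simp
qed

lemma has_real_derivative_comp_hyp_2:
  assumes "s \<noteq> 0" "f differentiable (at (hyp s (a, b)))"
  shows "((\<lambda>b. f (hyp s (a, b))) has_real_derivative
    (b / hyp_time s (a, b)) * pd f e_t (hyp s (a, b)) + pd f e_2 (hyp s (a, b))) (at b within X)"
proof -
  have "((\<lambda>b. hyp s (a, b)) has_vector_derivative (b / hyp_time s (a, b), 0, 1)) (at b within X)"
    unfolding hyp_eq
    by (intro has_vector_derivative_Pair
        has_real_derivative_hyp_time_2[OF assms(1), unfolded has_real_derivative_iff_has_vector_derivative])
      (auto intro!: derivative_eq_intros)
  from has_real_derivative_pd_comp[OF this assms(2)] show ?thesis
    using pd_coordinates[OF assms(2)] by simp
qed

text \<open>The wave operator in the coordinates \<open>(s, y)\<close> of \<open>t = \<surd>(s\<^sup>2 + |y|\<^sup>2)\<close>: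
  \<open>s \<box>u = s \<phi>\<^sub>s\<^sub>s + 2 \<phi>\<^sub>s + 2 y\<^sup>a \<phi>\<^sub>s\<^sub>a - s (\<phi>\<^sub>1\<^sub>1 + \<phi>\<^sub>2\<^sub>2)\<close>, where the derivatives of
  \<open>\<phi>(s, y) = u(t, y)\<close> are expanded by the chain rule.\<close>

lemma wave_in_hyperboloidal_coordinates:
  fixes s y1 y2 T ut utt ut1 ut2 u11 u22 :: real
  assumes T: "T^2 = s^2 + y1^2 + y2^2" "T > 0"
  shows "s * (utt - u11 - u22) =
     s * ((1/T - s^2/T^3)*ut + (s/T)^2*utt) + 2 * ((s/T)*ut)
   + 2 * (y1 * (-(s*y1/T^3)*ut + (s/T)*((y1/T)*utt + ut1))
        + y2 * (-(s*y2/T^3)*ut + (s/T)*((y2/T)*utt + ut2)))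
   - s * (((1/T - y1^2/T^3)*ut + (y1/T)*((y1/T)*utt + ut1) + (y1/T)*ut1 + u11)
        + ((1/T - y2^2/T^3)*ut + (y2/T)*((y2/T)*utt + ut2) + (y2/T)*ut2 + u22))"
    (is "_ = ?rhs")
proof -
  have "T \<noteq> 0" using T by simp
  define q where "q = 1/T"
  have q: "x / T = x * q" "x / T^2 = x * q^2" "x / T^3 = x * q^3" for x
    by (simp_all add: q_def field_simps)
  have "?rhs = s*utt*((s^2+y1^2+y2^2)*q^2) + s*ut*(q - (s^2+y1^2+y2^2)*q^3) - s*u11 - s*u22"
    unfolding q by (simp add: algebra_simps power2_eq_square power3_eq_cube)
  also have TT: "s^2+y1^2+y2^2 = T^2" using T by simp
  also have "T^2*q^2 = 1" using \<open>T \<noteq> 0\<close> by (simp add: q_def field_simps)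
  also have "T^2*q^3 = q"
    using \<open>T \<noteq> 0\<close> by (simp add: q_def field_simps power3_eq_cube power2_eq_square)
  finally show ?thesis using TT by (simp add: algebra_simps)
qed

text \<open>The conformal energy identity
  \<open>\<partial>\<^sub>s e = 2 K (s \<box>u) + \<partial>\<^sub>1 F\<^sub>1 + \<partial>\<^sub>2 F\<^sub>2\<close> with \<open>K = s \<phi>\<^sub>s + 2 y\<^sup>a \<phi>\<^sub>a + \<phi>\<close>,
  \<open>e = K\<^sup>2 + s\<^sup>2 |\<nabla>\<phi>|\<^sup>2\<close> and \<open>F\<^sub>a = 2 s (K \<phi>\<^sub>a - y\<^sub>a |\<nabla>\<phi>|\<^sup>2)\<close>, as a polynomial identity in the
  2-jet of \<open>\<phi>\<close>; the bracket after \<open>2 K\<close> on the right is \<open>s \<box>u\<close>.\<close>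

lemma energy_derivative_identity:
  fixes s y1 y2 p ps p1 p2 pss ps1 ps2 p11 p12 p22 :: real
  defines "K \<equiv> s * ps + 2 * (y1 * p1 + y2 * p2) + p"
  shows "2 * K * (ps + s * pss + 2 * (y1 * ps1 + y2 * ps2) + ps)
       + 2 * (s * p1) * (p1 + s * ps1) + 2 * (s * p2) * (p2 + s * ps2)
     = 2 * K * (s * pss + 2 * ps + 2 * (y1 * ps1 + y2 * ps2) - s * (p11 + p22))
     + 2 * s * ((s * ps1 + 2 * (p1 + y1 * p11 + y2 * p12) + p1) * p1 + K * p11
            - (p1^2 + p2^2) - y1 * (2 * p1 * p11 + 2 * p2 * p12))
     + 2 * s * ((s * ps2 + 2 * (y1 * p12 + p2 + y2 * p22) + p2) * p2 + K * p22
            - (p1^2 + p2^2) - y2 * (2 * p1 * p12 + 2 * p2 * p22))"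
  unfolding K_def by (simp add: algebra_simps power2_eq_square)

section \<open>The conformal energy identity on a hyperboloidal slab\<close>

locale slab_function =
  fixes s0 s1 :: real and u :: "pt \<Rightarrow> real" and U :: "pt set" and \<delta> :: real
  assumes s0_pos: "0 < s0" and s0_less_s1: "s0 < s1" and slab_subset: "slab s0 s1 \<subseteq> U"
    and C2: "C2_on U u" and \<delta>_pos: "\<delta> > 0"
    and vanishes_near_cone: "\<forall>p\<in>slab s0 s1. tco p \<le> rad p + 1 + \<delta> \<longrightarrow> u p = 0"
begin

lemma open_U: "open U"
  using C2 by (simp add: C2_on_def)

lemma differentiable_u: "q \<in> U \<Longrightarrow> u differentiable (at q)"
  using C2 by (simp add: C2_on_def)

lemma differentiable_pd_u: "q \<in> U \<Longrightarrow> (\<lambda>q. pd u v q) differentiable (at q)"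
  using C2 unfolding C2_on_def by blast

lemma continuous_on_pd_pd_u: "continuous_on U (\<lambda>q. pd (\<lambda>q'. pd u v q') w q)"
  using C2 unfolding C2_on_def by blast

lemma continuous_on_u: "continuous_on U u"
  by (intro continuous_at_imp_continuous_on ballI differentiable_imp_continuous_within
    differentiable_u)

lemma continuous_on_pd_u: "continuous_on U (\<lambda>q. pd u v q)"
  by (intro continuous_at_imp_continuous_on ballI differentiable_imp_continuous_within
    differentiable_pd_u)

lemma pd_pd_u_commute: "q \<in> U \<Longrightarrow> pd (\<lambda>q. pd u v q) w q = pd (\<lambda>q. pd u w q) v q"
  by (rule pd_pd_commute[OF open_U _ differentiable_u differentiable_pd_u differentiable_pd_u
        continuous_on_pd_pd_u continuous_on_pd_pd_u])

lemma s_pos: "s \<in> {s0..s1} \<Longrightarrow> s > 0"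
  using s0_pos by simp

lemma s_nonzero: "s \<in> {s0..s1} \<Longrightarrow> s \<noteq> 0"
  using s_pos by force

lemma hyp_time_nonzero: "s \<in> {s0..s1} \<Longrightarrow> hyp_time s y \<noteq> 0"
  using hyp_time_pos[of s y] s_pos by force

lemma hyp_in_U: "s \<in> {s0..s1} \<Longrightarrow> hyp s y \<in> U"
  using hyp_in_slab[OF s0_pos, of s s1 y] slab_subset by auto

text \<open>An open part of the slab on which \<open>u\<close>, hence also all its derivatives, vanish.\<close>

definition near_cone :: "pt set" where
  "near_cone = {p. 0 < tco p \<and> s0^2 < (tco p)^2 - (rad p)^2 \<and> (tco p)^2 - (rad p)^2 < s1^2
    \<and> tco p < rad p + 1 + \<delta>}"

lemma open_near_cone: "open near_cone"
proof -
  have c1: "continuous_on UNIV tco" unfolding tco_def by (intro continuous_intros)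
  have c2: "continuous_on UNIV rad" unfolding rad_def x1co_def x2co_def by (intro continuous_intros)
  have eq: "near_cone = {p. 0 < tco p} \<inter> {p. s0^2 < (tco p)^2 - (rad p)^2}
      \<inter> {p. (tco p)^2 - (rad p)^2 < s1^2} \<inter> {p. tco p < rad p + 1 + \<delta>}"
    by (auto simp: near_cone_def)
  show ?thesis unfolding eq
    by (intro open_Int open_Collect_less continuous_intros c1 c2)
qed

lemma near_cone_subset_slab: "near_cone \<subseteq> slab s0 s1"
  by (auto simp: near_cone_def slab_def)

lemma u_near_cone: "q \<in> near_cone \<Longrightarrow> u q = 0"
  using vanishes_near_cone near_cone_subset_slab by (auto simp: near_cone_def)

lemma pd_u_near_cone: "q \<in> near_cone \<Longrightarrow> pd u v q = 0"
  by (rule pd_eq_0_if_vanishes_on_open[OF open_near_cone u_near_cone])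

lemma pd_pd_u_near_cone: "q \<in> near_cone \<Longrightarrow> pd (\<lambda>q. pd u v q) w q = 0"
  by (rule pd_eq_0_if_vanishes_on_open[OF open_near_cone pd_u_near_cone])

definition support_radius :: real where
  "support_radius = s1^2 + 1"

text \<open>On \<open>H\<^sub>s\<close>, \<open>t - r = s\<^sup>2 / (t + r) < 1\<close> as soon as \<open>r > s\<^sub>1\<^sup>2\<close>: far out, the slab runs
  inside the region where \<open>u\<close> vanishes.\<close>

lemma hyp_in_near_cone:
  assumes "s0 < s" "s < s1" "support_radius \<le> norm y"
  shows "hyp s y \<in> near_cone"
proof -
  let ?r = "norm y" and ?t = "hyp_time s y"
  have t: "?t > 0" using hyp_time_pos[of s y] assms s0_pos by simp
  have "?r\<^sup>2 = (fst y)\<^sup>2 + (snd y)\<^sup>2" by (cases y) (simp add: norm_Pair)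
  then have d: "?t\<^sup>2 - ?r\<^sup>2 = s\<^sup>2" using hyp_time_squared[of s y] by simp
  have a: "s0\<^sup>2 < s\<^sup>2" and b: "s\<^sup>2 < s1\<^sup>2"
    using assms s0_pos by (auto intro: power_strict_mono)
  have "?t\<^sup>2 < (?r + 1)\<^sup>2"
  proof -
    have "?t\<^sup>2 = s\<^sup>2 + ?r\<^sup>2" using d by simp
    also have "\<dots> < ?r + ?r\<^sup>2" using b assms(3) by (simp add: support_radius_def)
    also have "\<dots> \<le> (?r + 1)\<^sup>2" by (simp add: power2_eq_square algebra_simps)
    finally show ?thesis .
  qed
  then have "?t < ?r + 1" by (rule power_less_imp_less_base) simp
  then show ?thesis
    unfolding near_cone_def using t d a b \<delta>_pos by (simp add: coordinates_hyp rad_hyp)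
qed

text \<open>At \<open>s = s\<^sub>0, s\<^sub>1\<close> the point \<open>hyp s y\<close> lies on the boundary of \<open>near_cone\<close>; continuity
  in \<open>s\<close> covers these two hyperboloids.\<close>

lemma vanishes_at_far_hyp:
  fixes f :: "pt \<Rightarrow> real"
  assumes f_cont: "continuous_on U f" and f_eq_0: "\<And>q. q \<in> near_cone \<Longrightarrow> f q = 0"
    and s: "s \<in> {s0..s1}" and far: "support_radius \<le> norm y"
  shows "f (hyp s y) = 0"
proof -
  have "continuous_on {s0..s1} (\<lambda>\<sigma>. f (hyp \<sigma> y))"
  proof (rule continuous_on_compose2[OF f_cont])
    show "continuous_on {s0..s1} (\<lambda>\<sigma>. hyp \<sigma> y)" unfolding hyp_def by (intro continuous_intros)
    show "(\<lambda>\<sigma>. hyp \<sigma> y) ` {s0..s1} \<subseteq> U" by (simp add: image_subset_iff hyp_in_U)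
  qed
  moreover have "closure {s0<..<s1} = {s0..s1}" using s0_less_s1 by simp
  moreover have "f (hyp \<sigma> y) = 0" if "\<sigma> \<in> {s0<..<s1}" for \<sigma>
    using hyp_in_near_cone far f_eq_0 that by auto
  ultimately show ?thesis
    using continuous_constant_on_closure[of "{s0<..<s1}" "\<lambda>\<sigma>. f (hyp \<sigma> y)" 0 s] s by auto
qed

definition phi :: "real \<Rightarrow> real \<times> real \<Rightarrow> real" where
  "phi s y = u (hyp s y)"

definition Du :: "pt \<Rightarrow> real \<Rightarrow> real \<times> real \<Rightarrow> real" where
  "Du v s y = pd u v (hyp s y)"

definition D2u :: "pt \<Rightarrow> pt \<Rightarrow> real \<Rightarrow> real \<times> real \<Rightarrow> real" where
  "D2u v w s y = pd (\<lambda>q. pd u v q) w (hyp s y)"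

lemma fields_vanish_far:
  assumes "s \<in> {s0..s1}" "support_radius \<le> \<bar>fst y\<bar> \<or> support_radius \<le> \<bar>snd y\<bar>"
  shows "phi s y = 0" "Du v s y = 0" "D2u v w s y = 0"
proof -
  have far: "support_radius \<le> norm y"
    using assms(2) norm_fst_le[of "fst y" "snd y"] norm_snd_le[of "snd y" "fst y"] by auto
  show "phi s y = 0" "Du v s y = 0" "D2u v w s y = 0"
    using vanishes_at_far_hyp[OF continuous_on_u u_near_cone assms(1) far]
      vanishes_at_far_hyp[OF continuous_on_pd_u pd_u_near_cone assms(1) far]
      vanishes_at_far_hyp[OF continuous_on_pd_pd_u pd_pd_u_near_cone assms(1) far]
    by (simp_all add: phi_def Du_def D2u_def)
qed

text \<open>The frame derivatives \<open>phi_s\<close>, \<open>phi_a\<close> of \<open>u\<close> on \<open>H\<^sub>s\<close> and their derivatives in \<open>(s, y)\<close>,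
  expanded by the chain rule; the lemmas \<open>deriv_*\<close> below show that they are the partial
  derivatives of \<open>phi\<close>.\<close>

definition phi_s :: "real \<Rightarrow> real \<times> real \<Rightarrow> real" where
  "phi_s s y = (s / hyp_time s y) * Du e_t s y"

definition phi_1 :: "real \<Rightarrow> real \<times> real \<Rightarrow> real" where
  "phi_1 s y = (fst y / hyp_time s y) * Du e_t s y + Du e_1 s y"

definition phi_2 :: "real \<Rightarrow> real \<times> real \<Rightarrow> real" where
  "phi_2 s y = (snd y / hyp_time s y) * Du e_t s y + Du e_2 s y"

definition phi_ss :: "real \<Rightarrow> real \<times> real \<Rightarrow> real" where
  "phi_ss s y = (1/hyp_time s y - s^2/(hyp_time s y)^3) * Du e_t s y
    + (s/hyp_time s y)^2 * D2u e_t e_t s y"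

definition phi_s1 :: "real \<Rightarrow> real \<times> real \<Rightarrow> real" where
  "phi_s1 s y = -(s*fst y/(hyp_time s y)^3) * Du e_t s y
    + (s/hyp_time s y)*((fst y/hyp_time s y)*D2u e_t e_t s y + D2u e_t e_1 s y)"

definition phi_s2 :: "real \<Rightarrow> real \<times> real \<Rightarrow> real" where
  "phi_s2 s y = -(s* snd y/(hyp_time s y)^3) * Du e_t s y
    + (s/hyp_time s y)*((snd y/hyp_time s y)*D2u e_t e_t s y + D2u e_t e_2 s y)"

definition phi_11 :: "real \<Rightarrow> real \<times> real \<Rightarrow> real" where
  "phi_11 s y = (1/hyp_time s y - (fst y)^2/(hyp_time s y)^3) * Du e_t s y
    + (fst y/hyp_time s y)*((fst y/hyp_time s y)*D2u e_t e_t s y + D2u e_t e_1 s y)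
    + (fst y/hyp_time s y)*D2u e_t e_1 s y + D2u e_1 e_1 s y"

definition phi_12 :: "real \<Rightarrow> real \<times> real \<Rightarrow> real" where
  "phi_12 s y = -(fst y* snd y/(hyp_time s y)^3) * Du e_t s y
    + (fst y/hyp_time s y)*((snd y/hyp_time s y)*D2u e_t e_t s y + D2u e_t e_2 s y)
    + (snd y/hyp_time s y)*D2u e_t e_1 s y + D2u e_1 e_2 s y"

definition phi_22 :: "real \<Rightarrow> real \<times> real \<Rightarrow> real" where
  "phi_22 s y = (1/hyp_time s y - (snd y)^2/(hyp_time s y)^3) * Du e_t s y
    + (snd y/hyp_time s y)*((snd y/hyp_time s y)*D2u e_t e_t s y + D2u e_t e_2 s y)
    + (snd y/hyp_time s y)*D2u e_t e_2 s y + D2u e_2 e_2 s y"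

definition wave_hyp :: "real \<Rightarrow> real \<times> real \<Rightarrow> real" where
  "wave_hyp s y = D2u e_t e_t s y - D2u e_1 e_1 s y - D2u e_2 e_2 s y"

definition Ku_plus_u :: "real \<Rightarrow> real \<times> real \<Rightarrow> real" where
  "Ku_plus_u s y = s * phi_s s y + 2 * (fst y * phi_1 s y + snd y * phi_2 s y) + phi s y"

definition energy :: "real \<Rightarrow> real \<times> real \<Rightarrow> real" where
  "energy s y = (Ku_plus_u s y)^2 + (s * phi_1 s y)^2 + (s * phi_2 s y)^2"

definition flux_1 :: "real \<Rightarrow> real \<times> real \<Rightarrow> real" where
  "flux_1 s y = 2 * s * (Ku_plus_u s y * phi_1 s y - fst y * ((phi_1 s y)^2 + (phi_2 s y)^2))"

definition flux_2 :: "real \<Rightarrow> real \<times> real \<Rightarrow> real" where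
  "flux_2 s y = 2 * s * (Ku_plus_u s y * phi_2 s y - snd y * ((phi_1 s y)^2 + (phi_2 s y)^2))"

lemma D2u_commute: "s \<in> {s0..s1} \<Longrightarrow> D2u v w s y = D2u w v s y"
  unfolding D2u_def by (rule pd_pd_u_commute[OF hyp_in_U])

lemma deriv_s_phi:
  "s \<in> {s0..s1} \<Longrightarrow> ((\<lambda>\<sigma>. phi \<sigma> y) has_real_derivative phi_s s y) (at s within X)"
  unfolding phi_def phi_s_def Du_def
  using has_real_derivative_comp_hyp_s[OF s_nonzero differentiable_u[OF hyp_in_U]] by simp

lemma deriv_1_phi:
  "s \<in> {s0..s1} \<Longrightarrow> ((\<lambda>a. phi s (a, b)) has_real_derivative phi_1 s (a, b)) (at a within X)"
  unfolding phi_def phi_1_def Du_def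
  using has_real_derivative_comp_hyp_1[OF s_nonzero differentiable_u[OF hyp_in_U]] by simp

lemma deriv_2_phi:
  "s \<in> {s0..s1} \<Longrightarrow> ((\<lambda>b. phi s (a, b)) has_real_derivative phi_2 s (a, b)) (at b within X)"
  unfolding phi_def phi_2_def Du_def
  using has_real_derivative_comp_hyp_2[OF s_nonzero differentiable_u[OF hyp_in_U]] by simp

lemma deriv_s_Du:
  "s \<in> {s0..s1} \<Longrightarrow>
    ((\<lambda>\<sigma>. Du v \<sigma> y) has_real_derivative (s / hyp_time s y) * D2u v e_t s y) (at s within X)"
  unfolding Du_def D2u_def
  using has_real_derivative_comp_hyp_s[OF s_nonzero differentiable_pd_u[OF hyp_in_U]] by simp

lemma deriv_1_Du:
  "s \<in> {s0..s1} \<Longrightarrow> ((\<lambda>a. Du v s (a, b)) has_real_derivative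
    (a / hyp_time s (a, b)) * D2u v e_t s (a, b) + D2u v e_1 s (a, b)) (at a within X)"
  unfolding Du_def D2u_def
  using has_real_derivative_comp_hyp_1[OF s_nonzero differentiable_pd_u[OF hyp_in_U]] by simp

lemma deriv_2_Du:
  "s \<in> {s0..s1} \<Longrightarrow> ((\<lambda>b. Du v s (a, b)) has_real_derivative
    (b / hyp_time s (a, b)) * D2u v e_t s (a, b) + D2u v e_2 s (a, b)) (at b within X)"
  unfolding Du_def D2u_def
  using has_real_derivative_comp_hyp_2[OF s_nonzero differentiable_pd_u[OF hyp_in_U]] by simp

lemma deriv_s_phi_s:
  assumes s: "s \<in> {s0..s1}"
  shows "((\<lambda>\<sigma>. phi_s \<sigma> y) has_real_derivative phi_ss s y) (at s within X)"
proof -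
  let ?T = "hyp_time s y"
  have T: "?T \<noteq> 0" by (rule hyp_time_nonzero[OF s])
  have "((\<lambda>\<sigma>. phi_s \<sigma> y) has_real_derivative
      ((1 * ?T - s * (s / ?T)) / (?T * ?T)) * Du e_t s y
      + ((s / ?T) * D2u e_t e_t s y) * (s / ?T)) (at s within X)"
    unfolding phi_s_def
    by (intro DERIV_mult DERIV_divide DERIV_ident has_real_derivative_hyp_time_s[OF s_nonzero[OF s]]
        deriv_s_Du[OF s] T)
  then show ?thesis
    by (rule DERIV_cong) (use T in \<open>simp add: phi_ss_def field_simps power2_eq_square power3_eq_cube\<close>)
qed

lemma deriv_s_phi_1:
  assumes s: "s \<in> {s0..s1}"
  shows "((\<lambda>\<sigma>. phi_1 \<sigma> y) has_real_derivative phi_s1 s y) (at s within X)"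
proof -
  let ?T = "hyp_time s y"
  have T: "?T \<noteq> 0" by (rule hyp_time_nonzero[OF s])
  have "((\<lambda>\<sigma>. phi_1 \<sigma> y) has_real_derivative
      ((0 * ?T - fst y * (s / ?T)) / (?T * ?T)) * Du e_t s y
      + ((s / ?T) * D2u e_t e_t s y) * (fst y / ?T) + (s / ?T) * D2u e_1 e_t s y) (at s within X)"
    unfolding phi_1_def
    by (intro DERIV_add DERIV_mult DERIV_divide DERIV_const
        has_real_derivative_hyp_time_s[OF s_nonzero[OF s]] deriv_s_Du[OF s] T)
  then show ?thesis
    by (rule DERIV_cong)
      (use T in \<open>simp add: phi_s1_def D2u_commute[OF s, of e_1 e_t] field_simps power2_eq_square
        power3_eq_cube\<close>)
qed

lemma deriv_s_phi_2:
  assumes s: "s \<in> {s0..s1}"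
  shows "((\<lambda>\<sigma>. phi_2 \<sigma> y) has_real_derivative phi_s2 s y) (at s within X)"
proof -
  let ?T = "hyp_time s y"
  have T: "?T \<noteq> 0" by (rule hyp_time_nonzero[OF s])
  have "((\<lambda>\<sigma>. phi_2 \<sigma> y) has_real_derivative
      ((0 * ?T - snd y * (s / ?T)) / (?T * ?T)) * Du e_t s y
      + ((s / ?T) * D2u e_t e_t s y) * (snd y / ?T) + (s / ?T) * D2u e_2 e_t s y) (at s within X)"
    unfolding phi_2_def
    by (intro DERIV_add DERIV_mult DERIV_divide DERIV_const
        has_real_derivative_hyp_time_s[OF s_nonzero[OF s]] deriv_s_Du[OF s] T)
  then show ?thesis
    by (rule DERIV_cong)
      (use T in \<open>simp add: phi_s2_def D2u_commute[OF s, of e_2 e_t] field_simps power2_eq_square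
        power3_eq_cube\<close>)
qed

lemma deriv_1_phi_s:
  assumes s: "s \<in> {s0..s1}"
  shows "((\<lambda>a. phi_s s (a, b)) has_real_derivative phi_s1 s (a, b)) (at a within X)"
proof -
  let ?T = "hyp_time s (a, b)"
  have T: "?T \<noteq> 0" by (rule hyp_time_nonzero[OF s])
  have "((\<lambda>a. phi_s s (a, b)) has_real_derivative
      ((0 * ?T - s * (a / ?T)) / (?T * ?T)) * Du e_t s (a, b)
      + ((a / ?T) * D2u e_t e_t s (a, b) + D2u e_t e_1 s (a, b)) * (s / ?T)) (at a within X)"
    unfolding phi_s_def
    by (intro DERIV_add DERIV_mult DERIV_divide DERIV_const
        has_real_derivative_hyp_time_1[OF s_nonzero[OF s]] deriv_1_Du[OF s] T)
  then show ?thesis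
    by (rule DERIV_cong) (use T in \<open>simp add: phi_s1_def field_simps power2_eq_square power3_eq_cube\<close>)
qed

lemma deriv_2_phi_s:
  assumes s: "s \<in> {s0..s1}"
  shows "((\<lambda>b. phi_s s (a, b)) has_real_derivative phi_s2 s (a, b)) (at b within X)"
proof -
  let ?T = "hyp_time s (a, b)"
  have T: "?T \<noteq> 0" by (rule hyp_time_nonzero[OF s])
  have "((\<lambda>b. phi_s s (a, b)) has_real_derivative
      ((0 * ?T - s * (b / ?T)) / (?T * ?T)) * Du e_t s (a, b)
      + ((b / ?T) * D2u e_t e_t s (a, b) + D2u e_t e_2 s (a, b)) * (s / ?T)) (at b within X)"
    unfolding phi_s_def
    by (intro DERIV_add DERIV_mult DERIV_divide DERIV_const
        has_real_derivative_hyp_time_2[OF s_nonzero[OF s]] deriv_2_Du[OF s] T)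
  then show ?thesis
    by (rule DERIV_cong) (use T in \<open>simp add: phi_s2_def field_simps power2_eq_square power3_eq_cube\<close>)
qed

lemma deriv_1_phi_1:
  assumes s: "s \<in> {s0..s1}"
  shows "((\<lambda>a. phi_1 s (a, b)) has_real_derivative phi_11 s (a, b)) (at a within X)"
proof -
  let ?T = "hyp_time s (a, b)"
  have T: "?T \<noteq> 0" by (rule hyp_time_nonzero[OF s])
  have "((\<lambda>a. phi_1 s (a, b)) has_real_derivative
      ((1 * ?T - a * (a / ?T)) / (?T * ?T)) * Du e_t s (a, b)
      + ((a / ?T) * D2u e_t e_t s (a, b) + D2u e_t e_1 s (a, b)) * (a / ?T)
      + ((a / ?T) * D2u e_1 e_t s (a, b) + D2u e_1 e_1 s (a, b))) (at a within X)"
    unfolding phi_1_def fst_conv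
    by (intro DERIV_add DERIV_mult DERIV_divide DERIV_ident
        has_real_derivative_hyp_time_1[OF s_nonzero[OF s]] deriv_1_Du[OF s] T)
  then show ?thesis
    by (rule DERIV_cong)
      (use T in \<open>simp add: phi_11_def D2u_commute[OF s, of e_1 e_t] field_simps power2_eq_square
        power3_eq_cube\<close>)
qed

lemma deriv_1_phi_2:
  assumes s: "s \<in> {s0..s1}"
  shows "((\<lambda>a. phi_2 s (a, b)) has_real_derivative phi_12 s (a, b)) (at a within X)"
proof -
  let ?T = "hyp_time s (a, b)"
  have T: "?T \<noteq> 0" by (rule hyp_time_nonzero[OF s])
  have "((\<lambda>a. phi_2 s (a, b)) has_real_derivative
      ((0 * ?T - b * (a / ?T)) / (?T * ?T)) * Du e_t s (a, b)
      + ((a / ?T) * D2u e_t e_t s (a, b) + D2u e_t e_1 s (a, b)) * (b / ?T)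
      + ((a / ?T) * D2u e_2 e_t s (a, b) + D2u e_2 e_1 s (a, b))) (at a within X)"
    unfolding phi_2_def snd_conv
    by (intro DERIV_add DERIV_mult DERIV_divide DERIV_const
        has_real_derivative_hyp_time_1[OF s_nonzero[OF s]] deriv_1_Du[OF s] T)
  then show ?thesis
    by (rule DERIV_cong)
      (use T in \<open>simp add: phi_12_def D2u_commute[OF s, of e_2 e_t] D2u_commute[OF s, of e_2 e_1]
        field_simps power2_eq_square power3_eq_cube\<close>)
qed

lemma deriv_2_phi_1:
  assumes s: "s \<in> {s0..s1}"
  shows "((\<lambda>b. phi_1 s (a, b)) has_real_derivative phi_12 s (a, b)) (at b within X)"
proof -
  let ?T = "hyp_time s (a, b)"
  have T: "?T \<noteq> 0" by (rule hyp_time_nonzero[OF s])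
  have "((\<lambda>b. phi_1 s (a, b)) has_real_derivative
      ((0 * ?T - a * (b / ?T)) / (?T * ?T)) * Du e_t s (a, b)
      + ((b / ?T) * D2u e_t e_t s (a, b) + D2u e_t e_2 s (a, b)) * (a / ?T)
      + ((b / ?T) * D2u e_1 e_t s (a, b) + D2u e_1 e_2 s (a, b))) (at b within X)"
    unfolding phi_1_def fst_conv
    by (intro DERIV_add DERIV_mult DERIV_divide DERIV_const
        has_real_derivative_hyp_time_2[OF s_nonzero[OF s]] deriv_2_Du[OF s] T)
  then show ?thesis
    by (rule DERIV_cong)
      (use T in \<open>simp add: phi_12_def D2u_commute[OF s, of e_1 e_t] field_simps power2_eq_square
        power3_eq_cube\<close>)
qed

lemma deriv_2_phi_2:
  assumes s: "s \<in> {s0..s1}"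
  shows "((\<lambda>b. phi_2 s (a, b)) has_real_derivative phi_22 s (a, b)) (at b within X)"
proof -
  let ?T = "hyp_time s (a, b)"
  have T: "?T \<noteq> 0" by (rule hyp_time_nonzero[OF s])
  have "((\<lambda>b. phi_2 s (a, b)) has_real_derivative
      ((1 * ?T - b * (b / ?T)) / (?T * ?T)) * Du e_t s (a, b)
      + ((b / ?T) * D2u e_t e_t s (a, b) + D2u e_t e_2 s (a, b)) * (b / ?T)
      + ((b / ?T) * D2u e_2 e_t s (a, b) + D2u e_2 e_2 s (a, b))) (at b within X)"
    unfolding phi_2_def snd_conv
    by (intro DERIV_add DERIV_mult DERIV_divide DERIV_ident
        has_real_derivative_hyp_time_2[OF s_nonzero[OF s]] deriv_2_Du[OF s] T)
  then show ?thesis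
    by (rule DERIV_cong)
      (use T in \<open>simp add: phi_22_def D2u_commute[OF s, of e_2 e_t] field_simps power2_eq_square
        power3_eq_cube\<close>)
qed

definition Ku_plus_u_s :: "real \<Rightarrow> real \<times> real \<Rightarrow> real" where
  "Ku_plus_u_s s y =
    phi_s s y + s * phi_ss s y + 2 * (fst y * phi_s1 s y + snd y * phi_s2 s y) + phi_s s y"

definition Ku_plus_u_1 :: "real \<Rightarrow> real \<times> real \<Rightarrow> real" where
  "Ku_plus_u_1 s y =
    s * phi_s1 s y + 2 * (phi_1 s y + fst y * phi_11 s y + snd y * phi_12 s y) + phi_1 s y"

definition Ku_plus_u_2 :: "real \<Rightarrow> real \<times> real \<Rightarrow> real" where
  "Ku_plus_u_2 s y =
    s * phi_s2 s y + 2 * (fst y * phi_12 s y + phi_2 s y + snd y * phi_22 s y) + phi_2 s y"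

definition energy_s :: "real \<Rightarrow> real \<times> real \<Rightarrow> real" where
  "energy_s s y = 2 * Ku_plus_u s y * Ku_plus_u_s s y
    + 2 * (s * phi_1 s y) * (phi_1 s y + s * phi_s1 s y)
    + 2 * (s * phi_2 s y) * (phi_2 s y + s * phi_s2 s y)"

definition flux_1_1 :: "real \<Rightarrow> real \<times> real \<Rightarrow> real" where
  "flux_1_1 s y = 2 * s * (Ku_plus_u_1 s y * phi_1 s y + Ku_plus_u s y * phi_11 s y
    - ((phi_1 s y)^2 + (phi_2 s y)^2)
    - fst y * (2 * phi_1 s y * phi_11 s y + 2 * phi_2 s y * phi_12 s y))"

definition flux_2_2 :: "real \<Rightarrow> real \<times> real \<Rightarrow> real" where
  "flux_2_2 s y = 2 * s * (Ku_plus_u_2 s y * phi_2 s y + Ku_plus_u s y * phi_22 s y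
    - ((phi_1 s y)^2 + (phi_2 s y)^2)
    - snd y * (2 * phi_1 s y * phi_12 s y + 2 * phi_2 s y * phi_22 s y))"

lemma deriv_s_Ku_plus_u:
  assumes s: "s \<in> {s0..s1}"
  shows "((\<lambda>\<sigma>. Ku_plus_u \<sigma> y) has_real_derivative Ku_plus_u_s s y) (at s within X)"
  unfolding Ku_plus_u_def
  by (rule derivative_eq_intros refl deriv_s_phi_s[OF s] deriv_s_phi_1[OF s] deriv_s_phi_2[OF s]
      deriv_s_phi[OF s])+
    (simp add: Ku_plus_u_s_def algebra_simps)

lemma deriv_s_energy:
  assumes s: "s \<in> {s0..s1}"
  shows "((\<lambda>\<sigma>. energy \<sigma> y) has_real_derivative energy_s s y) (at s within X)"
  unfolding energy_def
  by (rule derivative_eq_intros refl deriv_s_Ku_plus_u[OF s] deriv_s_phi_1[OF s] deriv_s_phi_2[OF s])+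
    (simp add: energy_s_def algebra_simps power2_eq_square)

lemma deriv_1_Ku_plus_u:
  assumes s: "s \<in> {s0..s1}"
  shows "((\<lambda>a. Ku_plus_u s (a, b)) has_real_derivative Ku_plus_u_1 s (a, b)) (at a within X)"
  unfolding Ku_plus_u_def fst_conv snd_conv
  by (rule derivative_eq_intros refl deriv_1_phi_s[OF s] deriv_1_phi_1[OF s] deriv_1_phi_2[OF s]
      deriv_1_phi[OF s])+
    (simp add: Ku_plus_u_1_def algebra_simps)

lemma deriv_2_Ku_plus_u:
  assumes s: "s \<in> {s0..s1}"
  shows "((\<lambda>b. Ku_plus_u s (a, b)) has_real_derivative Ku_plus_u_2 s (a, b)) (at b within X)"
  unfolding Ku_plus_u_def fst_conv snd_conv
  by (rule derivative_eq_intros refl deriv_2_phi_s[OF s] deriv_2_phi_1[OF s] deriv_2_phi_2[OF s]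
      deriv_2_phi[OF s])+
    (simp add: Ku_plus_u_2_def algebra_simps)

lemma deriv_1_flux_1:
  assumes s: "s \<in> {s0..s1}"
  shows "((\<lambda>a. flux_1 s (a, b)) has_real_derivative flux_1_1 s (a, b)) (at a within X)"
  unfolding flux_1_def fst_conv
  by (rule derivative_eq_intros refl deriv_1_Ku_plus_u[OF s] deriv_1_phi_1[OF s] deriv_1_phi_2[OF s])+
    (simp add: flux_1_1_def algebra_simps power2_eq_square)

lemma deriv_2_flux_2:
  assumes s: "s \<in> {s0..s1}"
  shows "((\<lambda>b. flux_2 s (a, b)) has_real_derivative flux_2_2 s (a, b)) (at b within X)"
  unfolding flux_2_def snd_conv
  by (rule derivative_eq_intros refl deriv_2_Ku_plus_u[OF s] deriv_2_phi_1[OF s] deriv_2_phi_2[OF s])+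
    (simp add: flux_2_2_def algebra_simps power2_eq_square)

lemma energy_s_eq:
  assumes s: "s \<in> {s0..s1}"
  shows "energy_s s y = 2 * s * Ku_plus_u s y * wave_hyp s y + flux_1_1 s y + flux_2_2 s y"
proof -
  have T: "(hyp_time s y)^2 = s^2 + (fst y)^2 + (snd y)^2" "hyp_time s y > 0"
    using hyp_time_squared[of s y] hyp_time_pos[of s y] s_pos[OF s] by auto
  have A: "s * wave_hyp s y = s * phi_ss s y + 2 * phi_s s y
      + 2 * (fst y * phi_s1 s y + snd y * phi_s2 s y) - s * (phi_11 s y + phi_22 s y)"
    unfolding wave_hyp_def phi_ss_def phi_s_def phi_s1_def phi_s2_def phi_11_def phi_22_def
    by (rule wave_in_hyperboloidal_coordinates[OF T])
  have P: "energy_s s y = 2 * Ku_plus_u s y * (s * phi_ss s y + 2 * phi_s s y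
      + 2 * (fst y * phi_s1 s y + snd y * phi_s2 s y) - s * (phi_11 s y + phi_22 s y))
      + flux_1_1 s y + flux_2_2 s y"
    unfolding energy_s_def Ku_plus_u_s_def flux_1_1_def flux_2_2_def Ku_plus_u_1_def Ku_plus_u_2_def
      Ku_plus_u_def
    by (rule energy_derivative_identity)
  show ?thesis unfolding P A[symmetric] by (simp add: algebra_simps)
qed

section \<open>Integration over the hyperboloids\<close>

abbreviation slab_coords :: "(real \<times> (real \<times> real)) set" where
  "slab_coords \<equiv> {s0..s1} \<times> UNIV"

lemma continuous_on_fields:
  "continuous_on slab_coords (\<lambda>z. phi (fst z) (snd z))"
  "continuous_on slab_coords (\<lambda>z. Du v (fst z) (snd z))"
  "continuous_on slab_coords (\<lambda>z. D2u v w (fst z) (snd z))"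
  unfolding phi_def Du_def D2u_def
  by (auto intro!: continuous_on_compose2[OF _ continuous_on_hyp] hyp_in_U
      continuous_on_u continuous_on_pd_u continuous_on_pd_pd_u)

lemma continuous_on_derivative_fields:
  "continuous_on slab_coords (\<lambda>z. phi_s (fst z) (snd z))"
  "continuous_on slab_coords (\<lambda>z. phi_1 (fst z) (snd z))"
  "continuous_on slab_coords (\<lambda>z. phi_2 (fst z) (snd z))"
  "continuous_on slab_coords (\<lambda>z. phi_ss (fst z) (snd z))"
  "continuous_on slab_coords (\<lambda>z. phi_s1 (fst z) (snd z))"
  "continuous_on slab_coords (\<lambda>z. phi_s2 (fst z) (snd z))"
  "continuous_on slab_coords (\<lambda>z. phi_11 (fst z) (snd z))"
  "continuous_on slab_coords (\<lambda>z. phi_12 (fst z) (snd z))"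
  "continuous_on slab_coords (\<lambda>z. phi_22 (fst z) (snd z))"
  "continuous_on slab_coords (\<lambda>z. wave_hyp (fst z) (snd z))"
  unfolding phi_s_def phi_1_def phi_2_def phi_ss_def phi_s1_def phi_s2_def phi_11_def phi_12_def
    phi_22_def wave_hyp_def
  by (auto intro!: continuous_intros continuous_on_fields continuous_on_hyp_time
      simp: hyp_time_nonzero)

lemma continuous_on_energy_fields:
  "continuous_on slab_coords (\<lambda>z. Ku_plus_u (fst z) (snd z))"
  "continuous_on slab_coords (\<lambda>z. energy (fst z) (snd z))"
  "continuous_on slab_coords (\<lambda>z. energy_s (fst z) (snd z))"
  "continuous_on slab_coords (\<lambda>z. flux_1_1 (fst z) (snd z))"
  "continuous_on slab_coords (\<lambda>z. flux_2_2 (fst z) (snd z))"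
  unfolding Ku_plus_u_def energy_def energy_s_def Ku_plus_u_s_def flux_1_1_def Ku_plus_u_1_def
    flux_2_2_def Ku_plus_u_2_def
  by (auto intro!: continuous_intros continuous_on_fields continuous_on_derivative_fields)

lemma continuous_on_slice:
  assumes "continuous_on slab_coords (\<lambda>z. f (fst z) (snd z))" "s \<in> {s0..s1}"
  shows "continuous_on A (f s)"
proof -
  have "continuous_on A (\<lambda>y. (\<lambda>z. f (fst z) (snd z)) (s, y))"
    using assms(2) by (intro continuous_on_compose2[OF assms(1)]) (auto intro!: continuous_intros)
  then show ?thesis by simp
qed

definition support_box :: "(real \<times> real) set" where
  "support_box = cbox (- support_radius, - support_radius) (support_radius, support_radius)"

lemma support_radius_pos: "support_radius > 0"
  using zero_le_power2[of s1] unfolding support_radius_def by linarith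

lemma integrable_on_support_box:
  fixes f :: "real \<Rightarrow> real \<times> real \<Rightarrow> real"
  assumes "continuous_on slab_coords (\<lambda>z. f (fst z) (snd z))" "s \<in> {s0..s1}"
  shows "f s integrable_on support_box"
  unfolding support_box_def by (rule integrable_continuous) (rule continuous_on_slice[OF assms])

lemma energy_fields_vanish_far:
  assumes "s \<in> {s0..s1}" "support_radius \<le> \<bar>fst y\<bar> \<or> support_radius \<le> \<bar>snd y\<bar>"
  shows "energy s y = 0" "wave_hyp s y = 0" "flux_1 s y = 0" "flux_2 s y = 0"
  using fields_vanish_far[OF assms]
  by (simp_all add: energy_def wave_hyp_def flux_1_def flux_2_def Ku_plus_u_def phi_s_def phi_1_def
    phi_2_def)

lemma notin_support_box: "y \<notin> support_box \<Longrightarrow> support_radius \<le> \<bar>fst y\<bar> \<or> support_radius \<le> \<bar>snd y\<bar>"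
  by (cases y) (auto simp: support_box_def cbox_Pair_eq)

lemma E_con_eq:
  assumes s: "s \<in> {s0..s1}"
  shows "E_con s u = integral support_box (energy s)"
proof -
  have "(\<lambda>y. (Kop u (hyp s y) + u (hyp s y))\<^sup>2 + (s * bar_1 u (hyp s y))\<^sup>2
      + (s * bar_2 u (hyp s y))\<^sup>2)
      = energy s"
    using s_pos[OF s]
    by (intro ext) (simp add: Kop_def bar_s_def bar_1_def bar_2_def hs_hyp coordinates_hyp
        energy_def Ku_plus_u_def phi_s_def phi_1_def phi_2_def phi_def Du_def)
  then have "E_con s u = integral UNIV (energy s)" by (simp add: E_con_def)
  also have "\<dots> = integral support_box (energy s)"
    by (rule integral_UNIV_eq_if_vanishes_outside)
      (rule energy_fields_vanish_far(1)[OF s notin_support_box])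
  finally show ?thesis .
qed

lemma L2_hyp_wave_eq:
  assumes s: "s \<in> {s0..s1}"
  shows "L2_hyp s (wave u) = sqrt (integral support_box (\<lambda>y. (wave_hyp s y)\<^sup>2))"
proof -
  have "L2_hyp s (wave u) = sqrt (integral UNIV (\<lambda>y. (wave_hyp s y)\<^sup>2))"
    by (simp add: L2_hyp_def wave_def wave_hyp_def D2u_def)
  also have "integral UNIV (\<lambda>y. (wave_hyp s y)\<^sup>2) = integral support_box (\<lambda>y. (wave_hyp s y)\<^sup>2)"
    by (rule integral_UNIV_eq_if_vanishes_outside)
      (simp add: energy_fields_vanish_far(2)[OF s notin_support_box])
  finally show ?thesis .
qed

lemma integral_flux_1_1:
  assumes s: "s \<in> {s0..s1}"
  shows "integral support_box (flux_1_1 s) = 0"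
  unfolding support_box_def
  using support_radius_pos continuous_on_slice[OF continuous_on_energy_fields(4) s]
    deriv_1_flux_1[OF s] energy_fields_vanish_far(3)[OF s]
  by (intro integral_cbox_eq_0_if_antiderivative_1[where F = "flux_1 s"]) auto

lemma integral_flux_2_2:
  assumes s: "s \<in> {s0..s1}"
  shows "integral support_box (flux_2_2 s) = 0"
  unfolding support_box_def
  using support_radius_pos continuous_on_slice[OF continuous_on_energy_fields(5) s]
    deriv_2_flux_2[OF s] energy_fields_vanish_far(4)[OF s]
  by (intro integral_cbox_eq_0_if_antiderivative_2[where F = "flux_2 s"]) auto

lemma has_real_derivative_energy_integral:
  assumes s: "s \<in> {s0..s1}"
  shows "((\<lambda>\<sigma>. integral support_box (energy \<sigma>)) has_real_derivative
    integral support_box (\<lambda>y. 2 * s * Ku_plus_u s y * wave_hyp s y)) (at s within {s0..s1})"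
proof -
  have "((\<lambda>\<sigma>. integral support_box (energy \<sigma>)) has_real_derivative
      integral support_box (energy_s s)) (at s within {s0..s1})"
    unfolding support_box_def
  proof (rule leibniz_rule_field_derivative)
    show "energy \<sigma> integrable_on
        cbox (- support_radius, - support_radius) (support_radius, support_radius)"
      if "\<sigma> \<in> {s0..s1}" for \<sigma>
      using integrable_on_support_box[OF continuous_on_energy_fields(2) that]
      by (simp add: support_box_def)
    show "continuous_on
        ({s0..s1} \<times> cbox (- support_radius, - support_radius) (support_radius, support_radius))
        (\<lambda>(\<sigma>, y). energy_s \<sigma> y)"
      using continuous_on_subset[OF continuous_on_energy_fields(3)]
      by (simp add: case_prod_unfold subset_iff)
  qed (use s deriv_s_energy in auto)
  moreover have "integral support_box (energy_s s)
      = integral support_box (\<lambda>y. 2 * s * Ku_plus_u s y * wave_hyp s y)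
        + integral support_box (flux_1_1 s) + integral support_box (flux_2_2 s)"
  proof -
    have "(\<lambda>y. 2 * s * Ku_plus_u s y * wave_hyp s y) integrable_on support_box"
      using integrable_on_support_box[OF _ s, of "\<lambda>s y. 2 * s * Ku_plus_u s y * wave_hyp s y"]
      by (simp add: continuous_intros continuous_on_energy_fields continuous_on_derivative_fields)
    moreover have "flux_1_1 s integrable_on support_box" "flux_2_2 s integrable_on support_box"
      using integrable_on_support_box[OF continuous_on_energy_fields(4) s]
        integrable_on_support_box[OF continuous_on_energy_fields(5) s] .
    ultimately show ?thesis
      unfolding energy_s_eq[OF s, abs_def] by (simp add: integral_add integrable_add)
  qed
  ultimately show ?thesis using integral_flux_1_1[OF s] integral_flux_2_2[OF s] by simp
qed

lemma energy_integral_deriv_bound: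
  assumes s: "s \<in> {s0..s1}"
  shows "integral support_box (\<lambda>y. 2 * s * Ku_plus_u s y * wave_hyp s y)
    \<le> 2 * sqrt (integral support_box (energy s))
      * (s * sqrt (integral support_box (\<lambda>y. (wave_hyp s y)\<^sup>2)))"
proof -
  let ?K = "integral support_box (\<lambda>y. (Ku_plus_u s y)\<^sup>2)" and ?E = "integral support_box (energy s)"
    and ?W = "integral support_box (\<lambda>y. (wave_hyp s y)\<^sup>2)"
  have integrable: "(\<lambda>y. (Ku_plus_u s y)\<^sup>2) integrable_on support_box"
    "(\<lambda>y. (wave_hyp s y)\<^sup>2) integrable_on support_box"
    "(\<lambda>y. Ku_plus_u s y * wave_hyp s y) integrable_on support_box"
    "energy s integrable_on support_box"
    using integrable_on_support_box[OF _ s, of "\<lambda>s y. (Ku_plus_u s y)\<^sup>2"]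
      integrable_on_support_box[OF _ s, of "\<lambda>s y. (wave_hyp s y)\<^sup>2"]
      integrable_on_support_box[OF _ s, of "\<lambda>s y. Ku_plus_u s y * wave_hyp s y"]
      integrable_on_support_box[OF continuous_on_energy_fields(2) s]
    by (simp_all add: continuous_intros continuous_on_energy_fields continuous_on_derivative_fields)
  have "integral support_box (\<lambda>y. 2 * s * Ku_plus_u s y * wave_hyp s y)
      = 2 * s * integral support_box (\<lambda>y. Ku_plus_u s y * wave_hyp s y)"
    by (simp add: mult.assoc)
  also have "\<dots> \<le> 2 * s * (sqrt ?K * sqrt ?W)"
    using Cauchy_Schwarz_integral[OF integrable(1-3)] s_pos[OF s] by simp
  also have "\<dots> \<le> 2 * s * (sqrt ?E * sqrt ?W)"
  proof -
    have "?K \<le> ?E"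
      using integrable by (intro integral_le) (auto simp: energy_def)
    moreover have "?W \<ge> 0" using integrable(2) by (simp add: integral_nonneg)
    ultimately show ?thesis
      using s_pos[OF s] by (intro mult_left_mono mult_right_mono) simp_all
  qed
  finally show ?thesis by (simp add: algebra_simps)
qed

lemma continuous_on_wave_norm:
  "continuous_on {s0..s1} (\<lambda>s. s * sqrt (integral support_box (\<lambda>y. (wave_hyp s y)\<^sup>2)))"
proof -
  have "continuous_on
      ({s0..s1} \<times> cbox (- support_radius, - support_radius) (support_radius, support_radius))
      (\<lambda>(s, y). (wave_hyp s y)\<^sup>2)"
    using continuous_on_subset[OF continuous_on_power[OF continuous_on_derivative_fields(10)]]
    by (simp add: case_prod_unfold subset_iff)
  from integral_continuous_on_param[OF this] show ?thesis
    unfolding support_box_def by (intro continuous_intros)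
qed

lemma conformal_energy_estimate:
  "sqrt (E_con s1 u) \<le> sqrt (E_con s0 u) + integral {s0..s1} (\<lambda>s. s * L2_hyp s (wave u))"
proof -
  let ?g = "\<lambda>s. s * sqrt (integral support_box (\<lambda>y. (wave_hyp s y)\<^sup>2))"
  have "sqrt (integral support_box (energy s1))
      \<le> sqrt (integral support_box (energy s0)) + integral {s0..s1} ?g"
  proof (rule sqrt_le_sqrt_add_integral_if_deriv_le)
    show "0 \<le> integral support_box (energy s)" if "s \<in> {s0..s1}" for s
      using integrable_on_support_box[OF continuous_on_energy_fields(2) that]
      by (rule integral_nonneg) (simp add: energy_def)
    show "0 \<le> ?g s" if "s \<in> {s0..s1}" for s
    proof -
      have "(\<lambda>y. (wave_hyp s y)\<^sup>2) integrable_on support_box"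
        using integrable_on_support_box[OF _ that, of "\<lambda>s y. (wave_hyp s y)\<^sup>2"]
        by (simp add: continuous_intros continuous_on_derivative_fields)
      then show ?thesis using s_pos[OF that] by (simp add: integral_nonneg)
    qed
  qed (use s0_less_s1 has_real_derivative_energy_integral energy_integral_deriv_bound
      continuous_on_wave_norm in auto)
  moreover have "integral {s0..s1} (\<lambda>s. s * L2_hyp s (wave u)) = integral {s0..s1} ?g"
    by (intro integral_cong) (simp add: L2_hyp_wave_eq)
  ultimately show ?thesis using s0_less_s1 by (simp add: E_con_eq)
qed

end

theorem lemma2p1:
  fixes s0 s1 :: real and u :: "pt \<Rightarrow> real" and U :: "pt set"
  assumes "1 < s0" and "s0 < s1"
    and "slab s0 s1 \<subseteq> U" and "C2_on U u"
    and "\<exists>\<delta>>0. \<forall>p\<in>slab s0 s1. tco p \<le> rad p + 1 + \<delta> \<longrightarrow> u p = 0"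
  shows "sqrt (E_con s1 u) \<le> sqrt (E_con s0 u) + integral {s0..s1} (\<lambda>s. s * L2_hyp s (wave u))"
proof -
  obtain \<delta> where "\<delta> > 0" "\<forall>p\<in>slab s0 s1. tco p \<le> rad p + 1 + \<delta> \<longrightarrow> u p = 0"
    using assms(5) by blast
  then interpret slab_function s0 s1 u U \<delta>
    using assms by unfold_locales auto
  show ?thesis by (rule conformal_energy_estimate)
qed

end
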